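(* $\mathsf{AP}(R_2,R_3)=\mathsf{AP}(R_3,R_2)=\mathsf{N}$.
   Context: Tuples in $\{0,1\}^4$ are written as strings $abcd$. The relations $R_1,\dots,R_5\subseteq\{0,1\}^4$ are $R_1=\{0000,1000,0100,1100,1010,0110,1001,0101,0011,1011,0111,1111\}$, $R_2=\{0000,1000,0100,1100,1010,0101,0011,1111\}$, $R_3=\{0000,1100,1010,0101,0011,1011,0111,1111\}$, $R_4=\{0000,1100,1010,0101,0011,1111\}$, $R_5=\{0000,1100,1010,0110,1001,0101,0011,1111\}$. For $R,S\subseteq\{0,1\}^4$, a Boolean function $f\colon\{0,1\}^n\to\{0,1\}$ is analogy-preserving relative to $(R,S)$ if for all $\mathbf{a},\mathbf{b},\mathbf{c},\mathbf{d}\in\{0,1\}^n$ with $(a_i,b_i,c_i,d_i)\in R$ for every $i$ and such that $(f(\mathbf{a}),f(\mathbf{b}),f(\mathbf{c}),x)\in S$ for some $x\in\{0,1\}$, we have $(f(\mathbf{a}),f(\mathbf{b}),f(\mathbf{c}),f(\mathbf{d}))\in S$; $\mathsf{AP}(R,S)$ is the set of all such functions of all arities. $\mathsf{N}$ is the set of all Boolean functions (of all arities) that are constant or the negation of a projection. *)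

theory Defs
  imports Main
begin

text \<open>Tuples in {0,1}^4 are encoded as bool quadruples, with 1 = True, 0 = False.\<close>

type_synonym quad = "bool \<times> bool \<times> bool \<times> bool"

definition R2 :: "quad set" where
  "R2 = {(False,False,False,False), (True,False,False,False), (False,True,False,False),
         (True,True,False,False), (True,False,True,False), (False,True,False,True),
         (False,False,True,True), (True,True,True,True)}"

definition R3 :: "quad set" where
  "R3 = {(False,False,False,False), (True,True,False,False), (True,False,True,False),
         (False,True,False,True), (False,False,True,True), (True,False,True,True),
         (False,True,True,True), (True,True,True,True)}"

text \<open>An n-ary Boolean function is represented by f :: bool list \<Rightarrow> bool, only its values
  on lists of length n being relevant.  AP_n R S f: f, viewed as n-ary, is in AP(R,S).\<close>

definition AP :: "quad set \<Rightarrow> quad set \<Rightarrow> nat \<Rightarrow> (bool list \<Rightarrow> bool) \<Rightarrow> bool" where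
  "AP R S n f \<longleftrightarrow>
     (\<forall>a b c d. length a = n \<and> length b = n \<and> length c = n \<and> length d = n \<and>
        (\<forall>i<n. (a!i, b!i, c!i, d!i) \<in> R) \<and> (\<exists>x. (f a, f b, f c, x) \<in> S)
        \<longrightarrow> (f a, f b, f c, f d) \<in> S)"

definition inN :: "nat \<Rightarrow> (bool list \<Rightarrow> bool) \<Rightarrow> bool" where
  "inN n f \<longleftrightarrow>
     (\<exists>k. \<forall>x. length x = n \<longrightarrow> f x = k) \<or>
     (\<exists>i<n. \<forall>x. length x = n \<longrightarrow> f x = (\<not> x!i))"

end

theory Submission
  imports Defs
begin

text \<open>Negating all four entries maps R2 onto R3 and back, so f \<mapsto> \<not> f(\<not>x) turns
  AP(R3,R2) into AP(R2,R3) and preserves N; it remains to show AP(R2,R3) \<subseteq> N.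
  For f in AP(R2,R3), suitable columns from R2 show that the zeros of f form an up-set
  closed under pointwise conjunction, hence the up-set of a least zero m, and that, when
  f(0\<dots>0) = 1 and f(1\<dots>1) = 0, the negation of every point where f is 1 is a zero of f.
  Any coordinate j with m_j = 1 then gives f x = \<not> x_j.\<close>

definition negq :: "quad \<Rightarrow> quad" where
  "negq = (\<lambda>(p, q, r, s). (\<not> p, \<not> q, \<not> r, \<not> s))"

lemma negq_simp [simp]: "negq (p, q, r, s) = (\<not> p, \<not> q, \<not> r, \<not> s)"
  by (simp add: negq_def)

lemma negq_negq [simp]: "negq (negq t) = t"
  by (cases t) simp

lemma mem_negq_image_iff: "t \<in> negq ` A \<longleftrightarrow> negq t \<in> A"
  by (metis image_iff negq_negq)

lemma negq_image_R2: "negq ` R2 = R3"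
  by (simp add: R2_def R3_def insert_commute)

lemma negq_image_R3: "negq ` R3 = R2"
  by (simp add: R2_def R3_def insert_commute)

definition dual_fun :: "(bool list \<Rightarrow> bool) \<Rightarrow> bool list \<Rightarrow> bool" where
  "dual_fun f x = (\<not> f (map Not x))"

lemma dual_fun_dual_fun [simp]: "dual_fun (dual_fun f) = f"
  by (simp add: dual_fun_def fun_eq_iff comp_def)

lemma AP_D:
  assumes "AP R S n f" "length a = n" "length b = n" "length c = n" "length d = n"
    and "\<And>i. i < n \<Longrightarrow> (a!i, b!i, c!i, d!i) \<in> R" and "(f a, f b, f c, x) \<in> S"
  shows "(f a, f b, f c, f d) \<in> S"
  using assms unfolding AP_def by blast

lemma AP_dual_fun:
  assumes "AP R S n f"
  shows "AP (negq ` R) (negq ` S) n (dual_fun f)"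
  unfolding AP_def
proof (intro allI impI, elim conjE exE)
  fix a b c d x
  assume "length a = n" "length b = n" "length c = n" "length d = n"
    and "\<forall>i<n. (a!i, b!i, c!i, d!i) \<in> negq ` R"
    and "(dual_fun f a, dual_fun f b, dual_fun f c, x) \<in> negq ` S"
  then have "(f (map Not a), f (map Not b), f (map Not c), f (map Not d)) \<in> S"
    by (intro AP_D[OF assms, where x = "\<not> x"])
      (simp_all add: mem_negq_image_iff dual_fun_def)
  then show "(dual_fun f a, dual_fun f b, dual_fun f c, dual_fun f d) \<in> negq ` S"
    by (simp add: mem_negq_image_iff dual_fun_def)
qed

lemma inN_dual_fun:
  assumes "inN n f"
  shows "inN n (dual_fun f)"
  using assms[unfolded inN_def]
proof
  assume "\<exists>k. \<forall>x. length x = n \<longrightarrow> f x = k"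
  then obtain k where "\<forall>x. length x = n \<longrightarrow> f x = k"
    by blast
  then have "\<forall>x. length x = n \<longrightarrow> dual_fun f x = (\<not> k)"
    by (simp add: dual_fun_def)
  then show ?thesis
    unfolding inN_def by blast
next
  assume "\<exists>i<n. \<forall>x. length x = n \<longrightarrow> f x = (\<not> x!i)"
  then obtain i where "i < n" "\<forall>x. length x = n \<longrightarrow> f x = (\<not> x!i)"
    by blast
  then have "\<forall>x. length x = n \<longrightarrow> dual_fun f x = (\<not> x!i)"
    by (simp add: dual_fun_def)
  with \<open>i < n\<close> show ?thesis
    unfolding inN_def by blast
qed

lemma inN_imp_AP:
  assumes "inN n f" and "negq ` R \<subseteq> S"
    and "\<And>k x. (k, k, k, x) \<in> S \<Longrightarrow> (k, k, k, k) \<in> S"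
  shows "AP R S n f"
  using assms(1) unfolding inN_def
proof
  assume "\<exists>k. \<forall>x. length x = n \<longrightarrow> f x = k"
  then show ?thesis
    using assms(3) unfolding AP_def by auto
next
  assume "\<exists>i<n. \<forall>x. length x = n \<longrightarrow> f x = (\<not> x!i)"
  then obtain i where "i < n" "\<forall>x. length x = n \<longrightarrow> f x = (\<not> x!i)"
    by blast
  then show ?thesis
    using assms(2) unfolding AP_def by force
qed

lemma meet_closed_has_least:
  assumes closed: "\<And>a b. P a \<Longrightarrow> P b \<Longrightarrow> P (map2 (\<and>) a b)"
    and len: "\<And>a. P a \<Longrightarrow> length a = n" and "P a"
  obtains m where "P m" "\<And>b i. P b \<Longrightarrow> i < n \<Longrightarrow> m!i \<Longrightarrow> b!i"
proof -
  define supp where "supp a = {i. i < n \<and> a!i}" for a :: "bool list"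
  have supp_conj: "supp (map2 (\<and>) a b) = supp a \<inter> supp b"
    if "length a = n" "length b = n" for a b
    using that by (auto simp: supp_def)
  have finite_supp: "finite (supp a)" for a
    unfolding supp_def by (rule finite_subset[of _ "{..<n}"]) auto
  obtain m where m: "P m" and min: "\<And>b. P b \<Longrightarrow> card (supp m) \<le> card (supp b)"
    using ex_has_least_nat[of P a "\<lambda>a. card (supp a)"] \<open>P a\<close> by blast
  have "supp m \<subseteq> supp b" if "P b" for b
  proof (rule ccontr)
    assume "\<not> supp m \<subseteq> supp b"
    then have "supp (map2 (\<and>) m b) \<subset> supp m"
      using supp_conj[OF len[OF m] len[OF \<open>P b\<close>]] by blast
    then have "card (supp (map2 (\<and>) m b)) < card (supp m)"
      by (rule psubset_card_mono[OF finite_supp])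
    with min[OF closed[OF m \<open>P b\<close>]] show False
      by simp
  qed
  then show thesis
    using that[OF m] unfolding supp_def by blast
qed

lemma AP_R2_R3_zero_mono:
  assumes ap: "AP R2 R3 n f" and "length a = n" "length b = n"
    and "\<forall>i<n. a!i \<longrightarrow> b!i" and "\<not> f a"
  shows "\<not> f b"
proof
  assume "f b"
  have "(f a, f b, f a, f a) \<in> R3"
  proof (rule AP_D[OF ap, where x = True])
    show "(a!i, b!i, a!i, a!i) \<in> R2" if "i < n" for i
      using assms(4) that by (cases "a!i"; cases "b!i") (auto simp: R2_def)
  qed (use assms \<open>f b\<close> in \<open>auto simp: R3_def\<close>)
  with \<open>\<not> f a\<close> \<open>f b\<close> show False by (simp add: R3_def)
qed

lemma AP_R2_R3_zero_conj:
  assumes ap: "AP R2 R3 n f" and "length a = n" "length b = n" and "\<not> f a" "\<not> f b"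
  shows "\<not> f (map2 (\<and>) a b)"
proof
  assume c: "f (map2 (\<and>) a b)"
  have "(f a, f b, f (map2 (\<and>) a b), f b) \<in> R3"
  proof (rule AP_D[OF ap, where x = True])
    show "(a!i, b!i, map2 (\<and>) a b ! i, b!i) \<in> R2" if "i < n" for i
      using assms that by (cases "a!i"; cases "b!i") (auto simp: R2_def)
  qed (use assms c in \<open>auto simp: R3_def\<close>)
  with assms c show False by (simp add: R3_def)
qed

lemma AP_R2_R3_one_compl:
  assumes ap: "AP R2 R3 n f" and "f (replicate n False)" "\<not> f (replicate n True)"
    and "length a = n" "f a"
  shows "\<not> f (map Not a)"
proof
  assume c: "f (map Not a)"
  have "(f a, f (replicate n False), f (replicate n True), f (map Not a)) \<in> R3"
  proof (rule AP_D[OF ap, where x = False])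
    show "(a!i, replicate n False ! i, replicate n True ! i, map Not a ! i) \<in> R2"
      if "i < n" for i
      using assms that by (cases "a!i") (auto simp: R2_def)
  qed (use assms in \<open>auto simp: R3_def\<close>)
  with assms c show False by (simp add: R3_def)
qed

lemma AP_R2_R3_imp_inN:
  assumes ap: "AP R2 R3 n f"
  shows "inN n f"
proof (cases "f (replicate n False)")
  case False
  have "f x = False" if "length x = n" for x
    using AP_R2_R3_zero_mono[OF ap _ that _ False] by simp
  then show ?thesis
    unfolding inN_def by blast
next
  case f0: True
  show ?thesis
  proof (cases "\<exists>y. length y = n \<and> \<not> f y")
    case False
    then have "\<forall>x. length x = n \<longrightarrow> f x = True"
      by blast
    then show ?thesis
      unfolding inN_def by blast
  next
    case True
    then obtain y where y: "length y = n" "\<not> f y"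
      by blast
    have f1: "\<not> f (replicate n True)"
      using AP_R2_R3_zero_mono[OF ap y(1) _ _ y(2)] by simp
    obtain m where m: "length m = n" "\<not> f m"
      and least: "\<And>b i. length b = n \<and> \<not> f b \<Longrightarrow> i < n \<Longrightarrow> m!i \<Longrightarrow> b!i"
    proof (rule meet_closed_has_least[of "\<lambda>b. length b = n \<and> \<not> f b" n y])
      show "length (map2 (\<and>) a b) = n \<and> \<not> f (map2 (\<and>) a b)"
        if "length a = n \<and> \<not> f a" "length b = n \<and> \<not> f b" for a b
        using that AP_R2_R3_zero_conj[OF ap, of a b] by simp
    qed (use y that in blast)+
    have "m \<noteq> replicate n False"
      using m(2) f0 by auto
    then obtain j where j: "j < n" "m!j"
      using m(1) by (auto simp: list_eq_iff_nth_eq)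
    have "f x = (\<not> x!j)" if x: "length x = n" for x
    proof (cases "f x")
      case True
      then have "\<not> f (map Not x)"
        using AP_R2_R3_one_compl[OF ap f0 f1 x] by blast
      then show ?thesis
        using True least[of "map Not x" j] j x by auto
    next
      case False
      then show ?thesis
        using least[of x j] j x by auto
    qed
    then show ?thesis
      unfolding inN_def using j(1) by blast
  qed
qed

theorem mainTheorem14:
  fixes n :: nat and f :: "bool list \<Rightarrow> bool"
  shows "(AP R2 R3 n f \<longleftrightarrow> inN n f) \<and> (AP R3 R2 n f \<longleftrightarrow> inN n f)"
proof -
  have AP_R2_R3_iff: "AP R2 R3 n g \<longleftrightarrow> inN n g" for g
    using AP_R2_R3_imp_inN inN_imp_AP[of n g R2 R3]
    by (auto simp: negq_image_R2 R3_def)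
  have "AP R3 R2 n f \<longleftrightarrow> AP R2 R3 n (dual_fun f)"
    using AP_dual_fun[of R3 R2 n f] AP_dual_fun[of R2 R3 n "dual_fun f"]
    by (auto simp: negq_image_R2 negq_image_R3)
  moreover have "inN n (dual_fun f) \<longleftrightarrow> inN n f"
    using inN_dual_fun[of n f] inN_dual_fun[of n "dual_fun f"] by auto
  ultimately show ?thesis
    using AP_R2_R3_iff by blast
qed

end
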